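(* Assume the following hypothesis: for every $\varepsilon>0$ there is a constant $c_\varepsilon>0$ such that for all sufficiently large real $x$, $$\Psi(x+x^{\varepsilon},x^{\varepsilon})-\Psi(x,x^{\varepsilon})\ge c_\varepsilon x^{\varepsilon}.$$ Then for every $\varepsilon>0$ we have $g(n)<n^{\varepsilon}$ for all sufficiently large integers $n$.
   Context: For real $x,y$, $\Psi(x,y)$ denotes the number of positive integers $\le x$ all of whose prime factors are $\le y$. For integers $n>1$ and $k\ge 1$, say that $(n,k)$ has a prime representation if there are distinct primes $P_1,\dots,P_k$ with $P_j\mid (n+j)$ for $1\le j\le k$. Define $g(n)$ to be the largest positive integer $k$ such that $(n,k)$ has a prime representation. *)

theory Defs
  imports "HOL-Analysis.Analysis" "HOL-Computational_Algebra.Primes"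
begin

definition Psi :: "real \<Rightarrow> real \<Rightarrow> nat" where
  "Psi x y = card {m::nat. 1 \<le> m \<and> real m \<le> x \<and>
                    (\<forall>p. prime p \<and> p dvd m \<longrightarrow> real p \<le> y)}"

definition prime_rep :: "nat \<Rightarrow> nat \<Rightarrow> bool" where
  "prime_rep n k \<longleftrightarrow> (\<exists>P :: nat \<Rightarrow> nat. inj_on P {1..k} \<and>
      (\<forall>j\<in>{1..k}. prime (P j) \<and> P j dvd (n + j)))"

definition g :: "nat \<Rightarrow> nat" where
  "g n = (GREATEST k. k \<ge> 1 \<and> prime_rep n k)"

end

theory Submission
  imports Defs
begin

text \<open>
  Put \<open>a = n\<^sup>\<epsilon>\<^sup>/\<^sup>2\<close> and split \<open>(n, n + K]\<close> into about \<open>a/3\<close> blocks of length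
  \<open>\<lceil>2a\<rceil>\<close>, so that \<open>K \<approx> 2a\<^sup>2/3 \<le> n\<^sup>\<epsilon>\<close>. A block starting at \<open>x \<in> [n, 2n]\<close> contains
  \<open>(x, x + x\<^sup>\<epsilon>\<^sup>/\<^sup>2]\<close>, so by the hypothesis it holds at least \<open>c a\<close> integers that are
  \<open>2a\<close>-smooth, and \<open>(n, n + K]\<close> holds about \<open>c a\<^sup>2/3\<close> of them. A prime representation
  of \<open>(n, K)\<close> would assign to these integers distinct primes, each at most \<open>2a\<close>; for
  large \<open>n\<close> there are too few such primes, so \<open>g n < K \<le> n\<^sup>\<epsilon>\<close>.
\<close>

definition smooth :: "real \<Rightarrow> nat \<Rightarrow> bool" where
  "smooth y m \<longleftrightarrow> (\<forall>p. prime p \<and> p dvd m \<longrightarrow> real p \<le> y)"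

lemma smooth_mono: "smooth y m \<Longrightarrow> y \<le> y' \<Longrightarrow> smooth y' m"
  unfolding smooth_def using order_trans by blast

lemma finite_nat_le_real: "finite {m::nat. real m \<le> z \<and> Q m}"
  by (rule finite_subset[of _ "{..nat \<lceil>z\<rceil>}"])
     (auto simp: nat_le_iff le_ceiling_iff intro: le_nat_iff[THEN iffD2])

lemma Psi_add_minus_Psi:
  assumes "0 \<le> h"
  shows "real (Psi (x + h) y) - real (Psi x y) =
    real (card {m::nat. 1 \<le> m \<and> x < real m \<and> real m \<le> x + h \<and> smooth y m})"
proof -
  define S where "S z = {m::nat. 1 \<le> m \<and> real m \<le> z \<and> smooth y m}" for z
  define B where "B = {m::nat. 1 \<le> m \<and> x < real m \<and> real m \<le> x + h \<and> smooth y m}"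
  have "S (x + h) = S x \<union> B" "S x \<inter> B = {}"
    using assms unfolding S_def B_def by auto
  moreover have finite_S: "finite (S z)" for z
    unfolding S_def by (rule finite_subset[OF _ finite_nat_le_real[of z "\<lambda>_. True"]]) auto
  then have "finite B"
    using \<open>S (x + h) = S x \<union> B\<close> by (metis finite_Un)
  ultimately have "card (S (x + h)) = card (S x) + card B"
    using finite_S by (simp add: card_Un_disjoint)
  moreover have "Psi z y = card (S z)" for z
    unfolding Psi_def S_def smooth_def ..
  ultimately show ?thesis
    unfolding B_def by simp
qed

lemma Psi_increment_le_card_block:
  assumes "0 \<le> h" "h \<le> real L" "z \<le> y"
  shows "real (Psi (real k + h) z) - real (Psi (real k) z)
           \<le> real (card {m \<in> {k<..k + L}. smooth y m})"
proof -
  have "{m::nat. 1 \<le> m \<and> real k < real m \<and> real m \<le> real k + h \<and> smooth z m}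
          \<subseteq> {m \<in> {k<..k + L}. smooth y m}"
  proof
    fix m assume "m \<in> {m::nat. 1 \<le> m \<and> real k < real m \<and> real m \<le> real k + h \<and> smooth z m}"
    then have "k < m" "real m \<le> real (k + L)" "smooth z m"
      using assms(2) by auto
    then show "m \<in> {m \<in> {k<..k + L}. smooth y m}"
      using assms(3) smooth_mono by (auto simp only: of_nat_le_iff mem_Collect_eq greaterThanAtMost_iff)
  qed
  then show ?thesis
    unfolding Psi_add_minus_Psi[OF assms(1)] by (simp add: card_mono)
qed

lemma card_smooth_blocks_ge:
  fixes b :: real
  assumes "\<And>i. i < M \<Longrightarrow> b \<le> real (card {m \<in> {n + i*L<..n + i*L + L}. smooth y m})"
  shows "real M * b \<le> real (card {m \<in> {n<..n + M*L}. smooth y m})"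
  using assms
proof (induction M)
  case 0
  then show ?case by simp
next
  case (Suc M)
  have "{m \<in> {n<..n + Suc M * L}. smooth y m} =
          {m \<in> {n<..n + M*L}. smooth y m} \<union> {m \<in> {n + M*L<..n + M*L + L}. smooth y m}"
    by auto
  then have "card {m \<in> {n<..n + Suc M * L}. smooth y m} =
               card {m \<in> {n<..n + M*L}. smooth y m} + card {m \<in> {n + M*L<..n + M*L + L}. smooth y m}"
    by (simp add: card_Un_disjoint disjoint_iff)
  then show ?case
    using Suc.IH Suc.prems by (fastforce simp: algebra_simps)
qed

lemma prime_rep_mono:
  assumes "prime_rep n k" "k' \<le> k"
  shows "prime_rep n k'"
proof -
  have "{1..k'} \<subseteq> {1..k}"
    using assms(2) by auto
  then show ?thesis
    using assms(1) unfolding prime_rep_def by (meson inj_on_subset subsetD)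
qed

lemma prime_rep_one: "1 \<le> n \<Longrightarrow> prime_rep n 1"
proof -
  assume "1 \<le> n"
  then obtain p :: nat where "prime p" "p dvd n + 1"
    using prime_factor_nat[of "n + 1"] by auto
  then show ?thesis
    unfolding prime_rep_def by (intro exI[of _ "\<lambda>_. p"]) auto
qed

lemma g_less_if_not_prime_rep:
  assumes "1 \<le> n" "\<not> prime_rep n K"
  shows "g n < K"
proof -
  have bounded: "k \<le> K" if "prime_rep n k" for k
    using assms(2) prime_rep_mono[OF that] by (meson nat_le_linear)
  have "1 \<le> g n \<and> prime_rep n (g n)"
    unfolding g_def by (rule GreatestI_nat[of _ 1 K]) (use prime_rep_one assms(1) bounded in auto)
  then have "g n \<le> K" "g n \<noteq> K"
    using assms(2) bounded by auto
  then show ?thesis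
    by simp
qed

text \<open>The map \<open>m \<mapsto> P\<^bsub>m-n\<^esub>\<close> sends \<open>y\<close>-smooth numbers injectively to primes \<open>\<le> y\<close>.\<close>

lemma card_smooth_le_if_prime_rep:
  assumes "prime_rep n K"
  shows "card {m \<in> {n<..n + K}. smooth y m} \<le> nat \<lfloor>y\<rfloor> + 1"
proof -
  define T where "T = {m \<in> {n<..n + K}. smooth y m}"
  obtain P where inj: "inj_on P {1..K}" and P: "\<And>j. j \<in> {1..K} \<Longrightarrow> prime (P j) \<and> P j dvd n + j"
    using assms unfolding prime_rep_def by blast
  have shift: "m - n \<in> {1..K}" "n + (m - n) = m" if "m \<in> T" for m
    using that unfolding T_def by auto
  have "inj_on (\<lambda>m. P (m - n)) T"
  proof (rule inj_onI)
    fix u v assume "u \<in> T" "v \<in> T" "P (u - n) = P (v - n)"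
    then show "u = v"
      using shift inj_onD[OF inj] by metis
  qed
  moreover have "(\<lambda>m. P (m - n)) ` T \<subseteq> {..nat \<lfloor>y\<rfloor>}"
  proof
    fix q assume "q \<in> (\<lambda>m. P (m - n)) ` T"
    then obtain m where m: "m \<in> T" "q = P (m - n)" by auto
    then have "prime q" "q dvd m"
      using P[OF shift(1)] shift(2) by metis+
    then have "real q \<le> y"
      using m(1) unfolding T_def smooth_def by auto
    then show "q \<in> {..nat \<lfloor>y\<rfloor>}"
      by (simp add: le_nat_floor)
  qed
  ultimately have "card T \<le> card {..nat \<lfloor>y\<rfloor>}"
    by (intro card_inj_on_le) auto
  then show ?thesis
    unfolding T_def by simp
qed

lemma powr_le_double_powr:
  fixes u x d :: real
  assumes "0 \<le> u" "u \<le> x" "x \<le> 2 * u" "0 \<le> d" "d \<le> 1"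
  shows "x powr d \<le> 2 * u powr d"
proof -
  have "x powr d \<le> (2 * u) powr d"
    using assms by (intro powr_mono2) auto
  also have "\<dots> = 2 powr d * u powr d"
    using assms by (simp add: powr_mult)
  also have "\<dots> \<le> 2 * u powr d"
    using powr_mono[of d 1 2] assms by (intro mult_right_mono) auto
  finally show ?thesis .
qed

lemma g_less_if_many_smooth_in_short_intervals:
  fixes n :: nat and e c :: real
  assumes e: "0 < e" "e \<le> 1" and c: "0 < c" and n: "1 \<le> n"
    and dense: "\<And>x. real n \<le> x \<Longrightarrow>
      c * x powr (e/2) \<le> real (Psi (x + x powr (e/2)) (x powr (e/2))) - real (Psi x (x powr (e/2)))"
    and large: "3 < c * (real n powr (e/2) / 3 - 1)"
  shows "real (g n) < real n powr e"
proof -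
  define a where "a = real n powr (e/2)"
  define L where "L = nat \<lceil>2*a\<rceil>"
  define M where "M = nat \<lfloor>a/3\<rfloor>"
  have a: "1 \<le> a"
    unfolding a_def using n e by (simp add: ge_one_powr_ge_zero)
  have "real L = of_int \<lceil>2*a\<rceil>"
    unfolding L_def using a by simp
  then have L: "2*a \<le> real L" "real L \<le> 2*a + 1"
    by simp_all
  have M: "a/3 - 1 \<le> real M" "real M \<le> a/3"
    unfolding M_def using a by linarith+
  have "real (M*L) \<le> a/3 * (2*a + 1)"
    unfolding of_nat_mult using M L a by (intro mult_mono) auto
  also have "\<dots> \<le> a*a"
    using a by (simp add: field_simps)
  finally have span_sq: "real (M*L) \<le> a*a" .
  have "a*a = real n powr e"
    unfolding a_def by (simp add: powr_add[symmetric])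
  moreover have "real n powr e \<le> real n"
    using powr_mono[of e 1 "real n"] n e by simp
  ultimately have span_le: "real (M*L) \<le> real n powr e" "M*L \<le> n"
    using span_sq of_nat_le_iff by (simp, linarith)
  have block: "c*a \<le> real (card {m \<in> {n + i*L<..n + i*L + L}. smooth (2*a) m})" if "i < M" for i
  proof -
    define x where "x = real (n + i*L)"
    have "i*L \<le> M*L"
      using that by simp
    then have x: "real n \<le> x" "x \<le> 2 * real n"
      using span_le(2) unfolding x_def by linarith+
    then have xd: "a \<le> x powr (e/2)" "x powr (e/2) \<le> 2*a"
      unfolding a_def using e powr_le_double_powr[of "real n" x "e/2"] by (simp_all add: powr_mono2)
    have "c*a \<le> c * x powr (e/2)"
      using xd c by simp
    also have "\<dots> \<le> real (Psi (x + x powr (e/2)) (x powr (e/2))) - real (Psi x (x powr (e/2)))"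
      using dense x by simp
    also have "\<dots> \<le> real (card {m \<in> {n + i*L<..n + i*L + L}. smooth (2*a) m})"
      using Psi_increment_le_card_block[where L = L and k = "n + i*L", folded x_def] xd L by simp
    finally show ?thesis .
  qed
  have "2*a + 1 \<le> 3*a"
    using a by simp
  also have "\<dots> < c * (a/3 - 1) * a"
    using large a n unfolding a_def by (intro mult_strict_right_mono) simp_all
  also have "\<dots> \<le> real M * (c*a)"
    using M c a by (simp add: mult_right_mono)
  also have "\<dots> \<le> real (card {m \<in> {n<..n + M*L}. smooth (2*a) m})"
    using block by (rule card_smooth_blocks_ge)
  finally have many: "2*a + 1 < real (card {m \<in> {n<..n + M*L}. smooth (2*a) m})" .
  have "\<not> prime_rep n (M*L)"
  proof
    assume "prime_rep n (M*L)"
    then have "card {m \<in> {n<..n + M*L}. smooth (2*a) m} \<le> nat \<lfloor>2*a\<rfloor> + 1"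
      by (rule card_smooth_le_if_prime_rep)
    then have "real (card {m \<in> {n<..n + M*L}. smooth (2*a) m}) \<le> real (nat \<lfloor>2*a\<rfloor> + 1)"
      by (rule of_nat_mono)
    moreover have "real (nat \<lfloor>2*a\<rfloor> + 1) \<le> 2*a + 1"
      using a by simp
    ultimately show False
      using many by linarith
  qed
  then have "g n < M*L"
    by (rule g_less_if_not_prime_rep[OF n])
  then show ?thesis
    using span_le(1) by linarith
qed

lemma eventually_powr_gt:
  fixes d C :: real
  assumes "0 < d"
  shows "\<forall>\<^sub>F n in sequentially. C < real n powr d"
proof -
  have "filterlim (\<lambda>n::nat. exp (d * ln (real n))) at_top sequentially"
    using assms
    by (intro filterlim_compose[OF exp_at_top] filterlim_tendsto_pos_mult_at_top[OF tendsto_const]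
        filterlim_compose[OF ln_at_top] filterlim_real_sequentially)
  then have "\<forall>\<^sub>F n in sequentially. C < exp (d * ln (real n))"
    by (simp add: filterlim_at_top_dense)
  moreover have "\<forall>\<^sub>F n in sequentially. real n powr d = exp (d * ln (real n))"
    using eventually_gt_at_top[of 0] by eventually_elim (simp add: powr_def mult.commute)
  ultimately show ?thesis
    by eventually_elim simp
qed

theorem theorem1p2:
  assumes hyp: "\<And>\<epsilon>::real. \<epsilon> > 0 \<Longrightarrow> \<exists>c>0. \<forall>\<^sub>F x in at_top.
      real (Psi (x + x powr \<epsilon>) (x powr \<epsilon>)) - real (Psi x (x powr \<epsilon>)) \<ge> c * x powr \<epsilon>"
  shows "\<And>\<epsilon>::real. \<epsilon> > 0 \<Longrightarrow> \<forall>\<^sub>F n in sequentially. real (g n) < real n powr \<epsilon>"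
proof -
  fix \<epsilon> :: real assume "\<epsilon> > 0"
  define e where "e = min \<epsilon> 1"
  have e: "0 < e" "e \<le> 1" "e \<le> \<epsilon>"
    using \<open>\<epsilon> > 0\<close> by (auto simp: e_def)
  obtain c X where c: "0 < c" and dense: "\<And>x. X \<le> x \<Longrightarrow>
      c * x powr (e/2) \<le> real (Psi (x + x powr (e/2)) (x powr (e/2))) - real (Psi x (x powr (e/2)))"
    using hyp[of "e/2"] e unfolding eventually_at_top_linorder by auto
  have "\<forall>\<^sub>F n in sequentially. 3 * (3/c + 1) < real n powr (e/2) \<and> X \<le> real n \<and> 1 \<le> n"
    using e by (intro eventually_conj eventually_powr_gt eventually_ge_at_top
        filterlim_real_sequentially[unfolded filterlim_at_top, rule_format]) auto
  then show "\<forall>\<^sub>F n in sequentially. real (g n) < real n powr \<epsilon>"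
  proof eventually_elim
    case (elim n)
    then have "3 < c * (real n powr (e/2) / 3 - 1)"
      using c by (simp add: field_simps)
    then have "real (g n) < real n powr e"
      using elim e c dense by (intro g_less_if_many_smooth_in_short_intervals) auto
    also have "\<dots> \<le> real n powr \<epsilon>"
      using elim e by (intro powr_mono) auto
    finally show ?case .
  qed
qed

end
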